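(* Let $(X,\mathcal{M},\mu)$ be a non-atomic measure space and $\Phi$ an $N^*$-function. Then every continuous linear functional on $(L_\Phi(X),d_\Phi)$ is identically zero, i.e. $L_\Phi(X)^*=\{0\}$.
   Context: An $N^*$-function is a function $\Phi:\mathbb{R}\to\mathbb{R}$ of the form $\Phi(x)=\int_0^{|x|}p(t)\,dt<+\infty$ for all $x$, where $p:[0,\infty)\to[0,\infty]$ is right-continuous, positive on $(0,\infty)$, non-increasing, and satisfies $\lim_{t\to0^+}p(t)=+\infty$ and $\lim_{t\to+\infty}p(t)=0$. $L_\Phi(X)$ is the space of (classes modulo a.e. equality of) measurable $f$ with $\int_X\Phi(f)\,d\mu<\infty$, with metric $d_\Phi(f,g)=\int_X\Phi(f-g)\,d\mu$. The measure space is non-atomic if every $A\in\mathcal{M}$ with $\mu(A)>0$ contains a measurable $B$ with $0<\mu(B)<\mu(A)$. *)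

theory Defs
  imports "HOL-Analysis.Analysis"
begin

definition N_star_function :: "(real \<Rightarrow> real) \<Rightarrow> bool" where
  "N_star_function \<Phi> \<longleftrightarrow>
     (\<exists>p :: real \<Rightarrow> ennreal.
        (\<forall>t\<ge>0. (p \<longlongrightarrow> p t) (at_right t)) \<and>
        (\<forall>t>0. p t > 0) \<and>
        (\<forall>s t. 0 \<le> s \<longrightarrow> s \<le> t \<longrightarrow> p t \<le> p s) \<and>
        (p \<longlongrightarrow> \<infinity>) (at_right 0) \<and>
        (p \<longlongrightarrow> 0) at_top \<and>
        (\<forall>x. (\<integral>\<^sup>+ t\<in>{0..\<bar>x\<bar>}. p t \<partial>lborel) < \<infinity> \<and>
             \<Phi> x = enn2real (\<integral>\<^sup>+ t\<in>{0..\<bar>x\<bar>}. p t \<partial>lborel)))"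

definition non_atomic :: "'a measure \<Rightarrow> bool" where
  "non_atomic M \<longleftrightarrow>
     (\<forall>A\<in>sets M. emeasure M A > 0 \<longrightarrow>
        (\<exists>B\<in>sets M. B \<subseteq> A \<and> 0 < emeasure M B \<and> emeasure M B < emeasure M A))"

text \<open>Representatives of elements of L_Phi(X) (classes modulo a.e. equality are not
  formed explicitly; continuity w.r.t. d_Phi forces any functional to respect them).\<close>
definition L_Phi :: "'a measure \<Rightarrow> (real \<Rightarrow> real) \<Rightarrow> ('a \<Rightarrow> real) set" where
  "L_Phi M \<Phi> = {f \<in> borel_measurable M. (\<integral>\<^sup>+ x. ennreal (\<Phi> (f x)) \<partial>M) < \<infinity>}"

definition d_Phi :: "'a measure \<Rightarrow> (real \<Rightarrow> real) \<Rightarrow> ('a \<Rightarrow> real) \<Rightarrow> ('a \<Rightarrow> real) \<Rightarrow> ennreal" where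
  "d_Phi M \<Phi> f g = (\<integral>\<^sup>+ x. ennreal (\<Phi> (f x - g x)) \<partial>M)"

definition continuous_linear_functional_L_Phi ::
    "'a measure \<Rightarrow> (real \<Rightarrow> real) \<Rightarrow> (('a \<Rightarrow> real) \<Rightarrow> real) \<Rightarrow> bool" where
  "continuous_linear_functional_L_Phi M \<Phi> T \<longleftrightarrow>
     (\<forall>f\<in>L_Phi M \<Phi>. \<forall>g\<in>L_Phi M \<Phi>. T (\<lambda>x. f x + g x) = T f + T g) \<and>
     (\<forall>f\<in>L_Phi M \<Phi>. \<forall>c::real. T (\<lambda>x. c * f x) = c * T f) \<and>
     (\<forall>f\<in>L_Phi M \<Phi>. \<forall>\<epsilon>>0. \<exists>\<delta>>0. \<forall>g\<in>L_Phi M \<Phi>.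
        d_Phi M \<Phi> f g < ennreal \<delta> \<longrightarrow> \<bar>T g - T f\<bar> < \<epsilon>)"

end

theory Submission
  imports Defs
begin

text \<open>By continuity at \<open>0\<close>, \<open>\<bar>T g\<bar> \<le> 1\<close> whenever the modular \<open>\<integral>\<Phi>(g)\<close> is below some
  \<open>\<delta> > 0\<close>. Non-atomicity (via Sierpinski's intermediate value theorem for measures) lets one cut
  off pieces of modular exactly \<open>\<delta>/2\<close>, so additivity gives \<open>\<bar>T h\<bar> \<le> 2\<integral>\<Phi>(h)/\<delta> + 2\<close> for
  every \<open>h\<close>. Applied to \<open>n f\<close> this yields \<open>\<bar>T f\<bar> \<le> (2/\<delta>) \<integral>\<Phi>(n f)/n + 2/n\<close>, and
  \<open>\<integral>\<Phi>(n f)/n \<rightarrow> 0\<close> by dominated convergence: \<open>\<Phi>(n y)/n\<close> is the integral of \<open>p(n t)\<close> over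
  \<open>[0, \<bar>y\<bar>]\<close>, which tends to \<open>0\<close> because \<open>p\<close> vanishes at infinity and is bounded by \<open>\<Phi>(y)\<close>
  because \<open>p\<close> is non-increasing.\<close>

lemma borel_measurable_antimono:
  fixes g :: "real \<Rightarrow> 'b::{linorder_topology, second_countable_topology}"
  assumes "antimono g"
  shows "g \<in> borel_measurable borel"
proof (rule borel_measurableI_greater)
  fix y
  have "y < g x" if "y < g b" "x \<le> b" for x b
    using that(1) antimonoD[OF assms that(2)] by (rule less_le_trans)
  then have "is_interval {x. y < g x}"
    unfolding is_interval_1 by blast
  then show "{x \<in> space borel. y < g x} \<in> sets borel"
    using real_interval_borel_measurable by simp
qed

text \<open>Extending \<open>p\<close> by \<open>p 0\<close> to the negative axis makes it antimonotone on all of \<open>\<real>\<close>.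
  Only monotonicity, \<open>p \<rightarrow> 0\<close> at infinity and finiteness of \<open>\<Phi>\<close> are used below.\<close>

lemma N_star_functionE:
  assumes "N_star_function \<Phi>"
  obtains q :: "real \<Rightarrow> ennreal"
  where "q \<in> borel_measurable borel" "antimono q" "(q \<longlongrightarrow> 0) at_top"
    "\<And>a. (\<integral>\<^sup>+ t\<in>{0..a}. q t \<partial>lborel) < \<infinity>"
    "\<And>x. \<Phi> x = enn2real (\<integral>\<^sup>+ t\<in>{0..\<bar>x\<bar>}. q t \<partial>lborel)"
proof -
  obtain p :: "real \<Rightarrow> ennreal"
    where anti: "\<forall>s t. 0 \<le> s \<longrightarrow> s \<le> t \<longrightarrow> p t \<le> p s"
      and lim: "(p \<longlongrightarrow> 0) at_top"
      and fin: "\<forall>x. (\<integral>\<^sup>+ t\<in>{0..\<bar>x\<bar>}. p t \<partial>lborel) < \<infinity> \<and>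
                   \<Phi> x = enn2real (\<integral>\<^sup>+ t\<in>{0..\<bar>x\<bar>}. p t \<partial>lborel)"
    using assms unfolding N_star_function_def by blast
  define q where "q t = p (max 0 t)" for t
  have q_eq: "(\<integral>\<^sup>+ t\<in>{0..a}. q t \<partial>lborel) = (\<integral>\<^sup>+ t\<in>{0..a}. p t \<partial>lborel)" for a
    by (rule nn_integral_cong) (auto simp: q_def indicator_def)
  have anti_q: "antimono q"
    unfolding q_def by (rule antimonoI) (use anti in auto)
  show ?thesis
  proof
    show "q \<in> borel_measurable borel"
      using anti_q by (rule borel_measurable_antimono)
    show "antimono q"
      by (fact anti_q)
    show "(q \<longlongrightarrow> 0) at_top"
      using lim by (rule tendsto_cong[THEN iffD1, rotated])
        (use eventually_ge_at_top[of 0] in \<open>eventually_elim, simp add: q_def\<close>)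
    show "(\<integral>\<^sup>+ t\<in>{0..a}. q t \<partial>lborel) < \<infinity>" for a
    proof (cases "0 \<le> a")
      case True
      then show ?thesis
        using fin q_eq[of a] by (metis abs_of_nonneg)
    qed (simp add: q_eq)
    show "\<Phi> x = enn2real (\<integral>\<^sup>+ t\<in>{0..\<bar>x\<bar>}. q t \<partial>lborel)" for x
      using fin by (simp add: q_eq)
  qed
qed

lemma set_nn_integral_interval_scale:
  fixes q :: "real \<Rightarrow> ennreal"
  assumes [measurable]: "q \<in> borel_measurable borel" and "c > 0"
  shows "(\<integral>\<^sup>+ t\<in>{0..c * a}. q t \<partial>lborel) = ennreal c * (\<integral>\<^sup>+ t\<in>{0..a}. q (c * t) \<partial>lborel)"
proof -
  have "(\<integral>\<^sup>+ t\<in>{0..c * a}. q t \<partial>lborel)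
      = ennreal c * (\<integral>\<^sup>+ t. q (0 + c * t) * indicator {0..c * a} (0 + c * t) \<partial>lborel)"
    using assms by (subst nn_integral_real_affine[where c = c and t = 0]) auto
  also have "(\<lambda>t. q (0 + c * t) * indicator {0..c * a} (0 + c * t)) = (\<lambda>t. q (c * t) * indicator {0..a} t)"
    using \<open>c > 0\<close> by (auto simp: indicator_def zero_le_mult_iff fun_eq_iff)
  finally show ?thesis .
qed

lemma N_star_function_nonneg: "N_star_function \<Phi> \<Longrightarrow> 0 \<le> \<Phi> x"
  by (erule N_star_functionE) simp

lemma N_star_function_zero:
  assumes "N_star_function \<Phi>"
  shows "\<Phi> 0 = 0"
proof -
  obtain q where "\<And>x. \<Phi> x = enn2real (\<integral>\<^sup>+ t\<in>{0..\<bar>x\<bar>}. q t \<partial>lborel)"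
    using assms by (rule N_star_functionE) blast
  moreover have "{0..0::real} \<in> null_sets lborel"
    by (simp add: null_sets_def)
  ultimately show ?thesis
    by (simp add: nn_integral_null_set del: atLeastAtMost_singleton)
qed

lemma N_star_function_minus: "N_star_function \<Phi> \<Longrightarrow> \<Phi> (- x) = \<Phi> x"
  by (erule N_star_functionE) simp

lemma N_star_function_borel:
  assumes "N_star_function \<Phi>"
  shows "\<Phi> \<in> borel_measurable borel"
proof -
  obtain q where fin: "\<And>a. (\<integral>\<^sup>+ t\<in>{0..a}. q t \<partial>lborel) < \<infinity>"
    and \<Phi>: "\<And>x. \<Phi> x = enn2real (\<integral>\<^sup>+ t\<in>{0..\<bar>x\<bar>}. q t \<partial>lborel)"
    using assms by (rule N_star_functionE) blast
  define \<Psi> where "\<Psi> a = enn2real (\<integral>\<^sup>+ t\<in>{0..a}. q t \<partial>lborel)" for a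
  have "mono \<Psi>"
    unfolding \<Psi>_def using fin
    by (intro monoI enn2real_mono nn_integral_mono) (auto simp: indicator_def intro: mult_left_mono)
  then have "\<Psi> \<in> borel_measurable borel"
    by (rule borel_measurable_mono)
  moreover have "\<Phi> = (\<lambda>x. \<Psi> \<bar>x\<bar>)"
    by (simp add: \<Psi>_def \<Phi> fun_eq_iff)
  ultimately show ?thesis
    by simp
qed

lemma N_star_function_scaled:
  assumes "N_star_function \<Phi>"
  obtains q :: "real \<Rightarrow> ennreal"
  where "q \<in> borel_measurable borel" "antimono q" "(q \<longlongrightarrow> 0) at_top"
    "\<And>a. (\<integral>\<^sup>+ t\<in>{0..a}. q t \<partial>lborel) < \<infinity>"
    "\<And>c y. c > 0 \<Longrightarrow> \<Phi> (c * y) = c * enn2real (\<integral>\<^sup>+ t\<in>{0..\<bar>y\<bar>}. q (c * t) \<partial>lborel)"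
proof -
  obtain q where q: "q \<in> borel_measurable borel" "antimono q" "(q \<longlongrightarrow> 0) at_top"
    "\<And>a. (\<integral>\<^sup>+ t\<in>{0..a}. q t \<partial>lborel) < \<infinity>"
    and \<Phi>: "\<And>x. \<Phi> x = enn2real (\<integral>\<^sup>+ t\<in>{0..\<bar>x\<bar>}. q t \<partial>lborel)"
    using assms by (rule N_star_functionE) blast
  have "\<Phi> (c * y) = c * enn2real (\<integral>\<^sup>+ t\<in>{0..\<bar>y\<bar>}. q (c * t) \<partial>lborel)" if "c > 0" for c y
  proof -
    have "\<bar>c * y\<bar> = c * \<bar>y\<bar>"
      using that by (simp add: abs_mult)
    then have "\<Phi> (c * y) = enn2real (\<integral>\<^sup>+ t\<in>{0..c * \<bar>y\<bar>}. q t \<partial>lborel)"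
      by (simp only: \<Phi>)
    also have "\<dots> = enn2real (ennreal c * (\<integral>\<^sup>+ t\<in>{0..\<bar>y\<bar>}. q (c * t) \<partial>lborel))"
      by (simp only: set_nn_integral_interval_scale[OF q(1) that])
    finally show ?thesis
      using that by (simp only: enn2real_mult enn2real_ennreal less_imp_le)
  qed
  with q show ?thesis
    by (rule that)
qed

lemma N_star_function_scale_le:
  assumes "N_star_function \<Phi>" and "1 \<le> c"
  shows "\<Phi> (c * y) \<le> c * \<Phi> y"
proof -
  obtain q where "antimono q" and fin: "\<And>a. (\<integral>\<^sup>+ t\<in>{0..a}. q t \<partial>lborel) < \<infinity>"
    and \<Phi>: "\<And>c y. c > 0 \<Longrightarrow> \<Phi> (c * y) = c * enn2real (\<integral>\<^sup>+ t\<in>{0..\<bar>y\<bar>}. q (c * t) \<partial>lborel)"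
    using assms(1) by (rule N_star_function_scaled) blast
  have "(\<integral>\<^sup>+ t\<in>{0..\<bar>y\<bar>}. q (c * t) \<partial>lborel) \<le> (\<integral>\<^sup>+ t\<in>{0..\<bar>y\<bar>}. q t \<partial>lborel)"
  proof (rule nn_integral_mono)
    fix t
    have "q (c * t) \<le> q t" if "0 \<le> t"
      using that assms(2) by (intro antimonoD[OF \<open>antimono q\<close>]) (simp add: mult_le_cancel_right1)
    then show "q (c * t) * indicator {0..\<bar>y\<bar>} t \<le> q t * indicator {0..\<bar>y\<bar>} t"
      by (simp add: indicator_def)
  qed
  then have "enn2real (\<integral>\<^sup>+ t\<in>{0..\<bar>y\<bar>}. q (c * t) \<partial>lborel) \<le> \<Phi> y"
    using \<Phi>[of 1 y] fin by (simp add: enn2real_mono)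
  then show ?thesis
    using \<Phi>[of c y] assms(2) by simp
qed

lemma N_star_function_sublinear:
  assumes "N_star_function \<Phi>"
  shows "(\<lambda>n. \<Phi> (real (Suc n) * y) / real (Suc n)) \<longlonglongrightarrow> 0"
proof -
  obtain q where [measurable]: "q \<in> borel_measurable borel"
    and "antimono q" "(q \<longlongrightarrow> 0) at_top" and fin: "(\<integral>\<^sup>+ t\<in>{0..\<bar>y\<bar>}. q t \<partial>lborel) < \<infinity>"
    and \<Phi>: "\<And>c y. c > 0 \<Longrightarrow> \<Phi> (c * y) = c * enn2real (\<integral>\<^sup>+ t\<in>{0..\<bar>y\<bar>}. q (c * t) \<partial>lborel)"
    using assms by (rule N_star_function_scaled) blast
  have "(\<lambda>n. \<integral>\<^sup>+ t. q (real (Suc n) * t) * indicator {0..\<bar>y\<bar>} t \<partial>lborel) \<longlonglongrightarrow> (\<integral>\<^sup>+ (t::real). 0 \<partial>lborel)"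
  proof (rule nn_integral_dominated_convergence[where w = "\<lambda>t. q t * indicator {0..\<bar>y\<bar>} t"
        and u = "\<lambda>n t. q (real (Suc n) * t) * indicator {0..\<bar>y\<bar>} t" and u' = "\<lambda>t. 0"])
    show "AE t in lborel. q (real (Suc n) * t) * indicator {0..\<bar>y\<bar>} t \<le> q t * indicator {0..\<bar>y\<bar>} t" for n
    proof (rule AE_I2)
      fix t
      have "q (real (Suc n) * t) \<le> q t" if "0 \<le> t"
        using that by (intro antimonoD[OF \<open>antimono q\<close>]) (simp add: mult_le_cancel_right1)
      then show "q (real (Suc n) * t) * indicator {0..\<bar>y\<bar>} t \<le> q t * indicator {0..\<bar>y\<bar>} t"
        by (simp add: indicator_def)
    qed
    show "AE t in lborel. (\<lambda>n. q (real (Suc n) * t) * indicator {0..\<bar>y\<bar>} t) \<longlonglongrightarrow> 0"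
      using AE_lborel_singleton[of 0]
    proof eventually_elim
      case (elim t)
      show ?case
      proof (cases "t \<in> {0..\<bar>y\<bar>}")
        case True
        with elim have "t > 0"
          by auto
        have "filterlim (\<lambda>n. real (Suc n) * t) at_top sequentially"
          using filterlim_real_sequentially[THEN filterlim_sequentially_Suc[THEN iffD2]] \<open>t > 0\<close>
          by (rule filterlim_at_top_mult_tendsto_pos[OF tendsto_const, rotated])
        then have "(\<lambda>n. q (real (Suc n) * t)) \<longlonglongrightarrow> 0"
          using \<open>(q \<longlongrightarrow> 0) at_top\<close> by (rule filterlim_compose[rotated])
        with True show ?thesis
          by simp
      qed simp
    qed
  qed (use fin in simp_all)
  then have "(\<lambda>n. \<integral>\<^sup>+ t\<in>{0..\<bar>y\<bar>}. q (real (Suc n) * t) \<partial>lborel) \<longlonglongrightarrow> ennreal 0"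
    by simp
  then have "(\<lambda>n. enn2real (\<integral>\<^sup>+ t\<in>{0..\<bar>y\<bar>}. q (real (Suc n) * t) \<partial>lborel)) \<longlonglongrightarrow> 0"
    by (rule tendsto_enn2real) simp
  then show ?thesis
    using \<Phi> by (simp del: of_nat_Suc)
qed

context finite_measure
begin

lemma non_atomic_small_subset:
  assumes "non_atomic M" and A: "A \<in> sets M" "0 < measure M A" and "0 < e"
  obtains C where "C \<in> sets M" "C \<subseteq> A" "0 < measure M C" "measure M C < e"
proof -
  have halve: "\<exists>D\<in>sets M. D \<subseteq> C \<and> 0 < measure M D \<and> measure M D \<le> measure M C / 2"
    if C: "C \<in> sets M" "0 < measure M C" for C
  proof -
    obtain B where B: "B \<in> sets M" "B \<subseteq> C" "0 < emeasure M B" "emeasure M B < emeasure M C"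
      using \<open>non_atomic M\<close> C unfolding non_atomic_def by (auto simp: emeasure_eq_measure)
    then have "0 < measure M B" "measure M B < measure M C"
      by (auto simp: emeasure_eq_measure ennreal_less_iff)
    moreover have "measure M (C - B) = measure M C - measure M B"
      using B C by (simp add: finite_measure_Diff)
    ultimately show ?thesis
      using B C by (cases "measure M B \<le> measure M C / 2") (blast, auto intro!: bexI[of _ "C - B"])
  qed
  have small: "\<exists>C\<in>sets M. C \<subseteq> A \<and> 0 < measure M C \<and> measure M C \<le> measure M A / 2 ^ n" for n
  proof (induction n)
    case (Suc n)
    then obtain C where C: "C \<in> sets M" "C \<subseteq> A" "0 < measure M C" "measure M C \<le> measure M A / 2 ^ n"
      by blast
    with halve obtain D where "D \<in> sets M" "D \<subseteq> C" "0 < measure M D" "measure M D \<le> measure M C / 2"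
      by blast
    with C show ?case
      by (intro bexI[of _ D]) auto
  qed (use A in auto)
  obtain n where "measure M A / 2 ^ n < e"
  proof -
    obtain n where "(1 / 2) ^ n < e / measure M A"
      using real_arch_pow_inv[of "e / measure M A" "1 / 2"] A \<open>0 < e\<close> by auto
    then show ?thesis
      using A by (intro that[of n]) (simp add: field_simps power_one_over)
  qed
  with small[of n] that show ?thesis
    by (meson le_less_trans)
qed

lemma greedy_extension:
  assumes S: "S \<in> sets M" "S \<subseteq> A" "measure M S \<le> c"
  obtains S' where "S' \<in> sets M" "S \<subseteq> S'" "S' \<subseteq> A" "measure M S' \<le> c"
    "\<And>C. C \<in> sets M \<Longrightarrow> C \<subseteq> A - S \<Longrightarrow> measure M S + measure M C \<le> c \<Longrightarrow>
      measure M C \<le> 2 * (measure M S' - measure M S)"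
proof -
  define cand where "cand = {C \<in> sets M. C \<subseteq> A - S \<and> measure M S + measure M C \<le> c}"
  define s where "s = Sup (measure M ` cand)"
  have "{} \<in> cand"
    using S by (simp add: cand_def)
  have "measure M C \<le> c" if "C \<in> cand" for C
  proof -
    have "measure M S + measure M C \<le> c"
      using that by (simp add: cand_def)
    then show ?thesis
      using measure_nonneg[of M S] by linarith
  qed
  then have bdd: "bdd_above (measure M ` cand)"
    by (intro bdd_aboveI[of _ c]) blast
  have upper: "measure M C \<le> s" if "C \<in> cand" for C
    unfolding s_def using bdd that by (intro cSup_upper) auto
  show ?thesis
  proof (cases "s = 0")
    case True
    with upper S show ?thesis
      by (intro that[of S]) (auto simp: cand_def)
  next
    case False
    with upper[OF \<open>{} \<in> cand\<close>] have "s / 2 < Sup (measure M ` cand)"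
      by (simp add: s_def)
    then obtain C where C: "C \<in> cand" "s / 2 < measure M C"
      using less_cSupD[of "measure M ` cand"] \<open>{} \<in> cand\<close> by blast
    then have C': "C \<in> sets M" "C \<subseteq> A - S" "measure M S + measure M C \<le> c"
      by (simp_all add: cand_def)
    then have union: "measure M (S \<union> C) = measure M S + measure M C"
      using S by (intro finite_measure_Union) auto
    have "measure M D \<le> 2 * (measure M (S \<union> C) - measure M S)"
      if "D \<in> sets M" "D \<subseteq> A - S" "measure M S + measure M D \<le> c" for D
      using upper[of D] that C(2) union by (simp add: cand_def)
    with C' S union show ?thesis
      by (intro that[of "S \<union> C"]) auto
  qed
qed

lemma greedy_sequence:
  assumes "0 \<le> c"
  obtains Bs where "\<And>n. Bs n \<in> sets M" "\<And>n. Bs n \<subseteq> A" "\<And>n. measure M (Bs n) \<le> c" "incseq Bs"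
    "\<And>n C. C \<in> sets M \<Longrightarrow> C \<subseteq> A - Bs n \<Longrightarrow> measure M (Bs n) + measure M C \<le> c \<Longrightarrow>
      measure M C \<le> 2 * (measure M (Bs (Suc n)) - measure M (Bs n))"
proof -
  let ?P = "\<lambda>_ S. S \<in> sets M \<and> S \<subseteq> A \<and> measure M S \<le> c"
  let ?Q = "\<lambda>_ S S'. S \<subseteq> S' \<and> (\<forall>C\<in>sets M. C \<subseteq> A - S \<longrightarrow> measure M S + measure M C \<le> c \<longrightarrow>
      measure M C \<le> 2 * (measure M S' - measure M S))"
  have "\<exists>Bs. \<forall>n. ?P n (Bs n) \<and> ?Q n (Bs n) (Bs (Suc n))"
  proof (rule dependent_nat_choice)
    show "\<exists>S. ?P 0 S"
      using assms by (intro exI[of _ "{}"]) simp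
  next
    fix S n
    assume "?P n S"
    then have S: "S \<in> sets M" "S \<subseteq> A" "measure M S \<le> c"
      by simp_all
    obtain S' where "S' \<in> sets M" "S \<subseteq> S'" "S' \<subseteq> A" "measure M S' \<le> c"
      and "\<And>C. C \<in> sets M \<Longrightarrow> C \<subseteq> A - S \<Longrightarrow> measure M S + measure M C \<le> c \<Longrightarrow>
        measure M C \<le> 2 * (measure M S' - measure M S)"
      by (rule greedy_extension[OF S]) (rule that)
    then show "\<exists>S'. ?P (Suc n) S' \<and> ?Q n S S'"
      by blast
  qed
  then obtain Bs where "\<And>n. ?P n (Bs n) \<and> ?Q n (Bs n) (Bs (Suc n))"
    by blast
  then show ?thesis
    by (intro that[of Bs] incseq_SucI) blast+
qed

text \<open>The greedy sequence adds at least half of what could still be added at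
  each step; its increments tend to zero, so no set of positive measure fitting under \<open>c\<close> can remain.\<close>

lemma non_atomic_intermediate_value:
  assumes "non_atomic M" and A: "A \<in> sets M" and c: "0 \<le> c" "c \<le> measure M A"
  obtains B where "B \<in> sets M" "B \<subseteq> A" "measure M B = c"
proof -
  obtain Bs where Bs: "\<And>n. Bs n \<in> sets M" "\<And>n. Bs n \<subseteq> A" "\<And>n. measure M (Bs n) \<le> c" "incseq Bs"
    and greedy: "\<And>n C. C \<in> sets M \<Longrightarrow> C \<subseteq> A - Bs n \<Longrightarrow> measure M (Bs n) + measure M C \<le> c \<Longrightarrow>
      measure M C \<le> 2 * (measure M (Bs (Suc n)) - measure M (Bs n))"
    using greedy_sequence[OF c(1)] by blast
  define B where "B = (\<Union>n. Bs n)"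
  have B: "B \<in> sets M" "B \<subseteq> A"
    using Bs by (auto simp: B_def)
  have lim: "(\<lambda>n. measure M (Bs n)) \<longlonglongrightarrow> measure M B"
    unfolding B_def using Bs by (intro finite_Lim_measure_incseq) auto
  have "measure M B \<le> c"
    by (rule LIMSEQ_le_const2[OF lim]) (use Bs in blast)
  moreover have "\<not> measure M B < c"
  proof
    assume "measure M B < c"
    moreover have "measure M (A - B) = measure M A - measure M B"
      using A B by (simp add: finite_measure_Diff)
    ultimately obtain C where C: "C \<in> sets M" "C \<subseteq> A - B" "0 < measure M C" "measure M C < c - measure M B"
      using non_atomic_small_subset[OF \<open>non_atomic M\<close>, of "A - B" "c - measure M B"] A B c by auto
    have bound: "measure M C \<le> 2 * (measure M (Bs (Suc n)) - measure M (Bs n))" for n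
    proof -
      have "Bs n \<subseteq> B"
        by (auto simp: B_def)
      moreover from this have "measure M (Bs n) \<le> measure M B"
        using B by (intro finite_measure_mono) auto
      ultimately show ?thesis
        using C by (intro greedy) auto
    qed
    have "(\<lambda>n. 2 * (measure M (Bs (Suc n)) - measure M (Bs n))) \<longlonglongrightarrow> 2 * (measure M B - measure M B)"
      using LIMSEQ_Suc[OF lim] lim by (intro tendsto_mult tendsto_diff tendsto_const)
    then have "measure M C \<le> 2 * (measure M B - measure M B)"
      by (rule LIMSEQ_le_const) (use bound in blast)
    with C show False
      by simp
  qed
  ultimately show ?thesis
    using B by (intro that[of B]) auto
qed

end

lemma emeasure_density_eq_0_iff:
  assumes [measurable]: "g \<in> borel_measurable M" and S: "S \<in> sets M" and pos: "\<And>x. x \<in> S \<Longrightarrow> 0 < g x"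
  shows "emeasure (density M g) S = 0 \<longleftrightarrow> emeasure M S = 0"
proof -
  have "(AE x in M. x \<in> S \<longrightarrow> g x = 0) \<longleftrightarrow> (AE x in M. x \<notin> S)"
    using pos by (intro AE_cong) (auto dest: pos)
  then have "S \<in> null_sets (density M g) \<longleftrightarrow> S \<in> null_sets M"
    using S null_sets_density_iff[of g M S] AE_iff_null_sets[of S M] by simp
  then show ?thesis
    using S by (simp add: null_sets_def)
qed

lemma non_atomic_density:
  assumes "non_atomic M" and [measurable]: "g \<in> borel_measurable M"
    and fin: "emeasure (density M g) (space M) < \<infinity>"
  shows "non_atomic (density M g)"
  unfolding non_atomic_def
proof (intro ballI impI)
  let ?\<nu> = "emeasure (density M g)"
  fix A
  assume "A \<in> sets (density M g)" and "0 < ?\<nu> A"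
  then have [measurable]: "A \<in> sets M"
    by simp
  define A' where "A' = A \<inter> {x \<in> space M. 0 < g x}"
  have A'_sets[measurable]: "A' \<in> sets M"
    unfolding A'_def by measurable
  have "?\<nu> (A - A') = (\<integral>\<^sup>+ x. g x * indicator (A - A') x \<partial>M)"
    by (rule emeasure_density) measurable
  also have "\<dots> = (\<integral>\<^sup>+ x. 0 \<partial>M)"
    by (rule nn_integral_cong) (auto simp: A'_def indicator_def)
  finally have "?\<nu> (A - A') = 0"
    by simp
  moreover have "?\<nu> A = ?\<nu> A' + ?\<nu> (A - A')"
    by (subst plus_emeasure) (auto simp: A'_def Un_absorb1)
  ultimately have "?\<nu> A' \<noteq> 0"
    using \<open>0 < ?\<nu> A\<close> by auto
  then have "0 < emeasure M A'"
    by (subst (asm) emeasure_density_eq_0_iff) (auto simp: A'_def zero_less_iff_neq_zero)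
  then obtain B where [measurable]: "B \<in> sets M" and B: "B \<subseteq> A'" "0 < emeasure M B" "emeasure M B < emeasure M A'"
    using \<open>non_atomic M\<close> A'_sets unfolding non_atomic_def by blast
  have "emeasure M A' = emeasure M B + emeasure M (A' - B)"
    using B by (subst plus_emeasure) (auto simp: Un_absorb1)
  with B have "emeasure M (A' - B) \<noteq> 0"
    by auto
  then have "?\<nu> (A' - B) \<noteq> 0"
    by (subst emeasure_density_eq_0_iff) (auto simp: A'_def)
  moreover have "?\<nu> B \<noteq> 0"
    using B by (subst emeasure_density_eq_0_iff) (auto simp: A'_def)
  moreover have "?\<nu> B < \<infinity>"
    using fin emeasure_space[of "density M g" B] by simp
  ultimately have "?\<nu> B < ?\<nu> B + ?\<nu> (A' - B)"
    by (metis add.right_neutral ennreal_add_left_cancel_less not_gr_zero)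
  also have "\<dots> = ?\<nu> A'"
    using B by (subst plus_emeasure) (auto simp: Un_absorb1)
  also have "\<dots> \<le> ?\<nu> A"
    by (rule emeasure_mono) (auto simp: A'_def)
  finally show "\<exists>B\<in>sets (density M g). B \<subseteq> A \<and> 0 < ?\<nu> B \<and> ?\<nu> B < ?\<nu> A"
    using B \<open>?\<nu> B \<noteq> 0\<close> by (intro bexI[of _ B]) (auto simp: A'_def zero_less_iff_neq_zero)
qed

abbreviation modular :: "'a measure \<Rightarrow> (real \<Rightarrow> real) \<Rightarrow> ('a \<Rightarrow> real) \<Rightarrow> ennreal" where
  "modular M \<Phi> f \<equiv> \<integral>\<^sup>+ x. ennreal (\<Phi> (f x)) \<partial>M"

lemma L_Phi_modular_le:
  assumes "f \<in> L_Phi M \<Phi>" and "g \<in> borel_measurable M"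
    and "\<And>x. x \<in> space M \<Longrightarrow> \<Phi> (g x) \<le> \<Phi> (f x)"
  shows "g \<in> L_Phi M \<Phi>"
proof -
  have "modular M \<Phi> g \<le> modular M \<Phi> f"
    using assms(3) by (intro nn_integral_mono ennreal_leI)
  with assms(1,2) show ?thesis
    by (auto simp: L_Phi_def)
qed

lemma L_Phi_scale:
  assumes "N_star_function \<Phi>" and f: "f \<in> L_Phi M \<Phi>" and "1 \<le> c"
  shows "(\<lambda>x. c * f x) \<in> L_Phi M \<Phi>"
proof -
  have [measurable]: "f \<in> borel_measurable M" "\<Phi> \<in> borel_measurable borel"
    using f N_star_function_borel[OF assms(1)] by (simp_all add: L_Phi_def)
  have "(\<integral>\<^sup>+ x. ennreal (\<Phi> (c * f x)) \<partial>M) \<le> (\<integral>\<^sup>+ x. ennreal c * ennreal (\<Phi> (f x)) \<partial>M)"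
    using N_star_function_scale_le[OF assms(1,3)] N_star_function_nonneg[OF assms(1)] \<open>1 \<le> c\<close>
    by (intro nn_integral_mono) (simp add: ennreal_mult'[symmetric] ennreal_leI)
  also have "\<dots> = ennreal c * modular M \<Phi> f"
    by (rule nn_integral_cmult) measurable
  also have "\<dots> < \<infinity>"
    using f by (simp add: L_Phi_def ennreal_mult_less_top)
  finally show ?thesis
    by (simp add: L_Phi_def)
qed

lemma L_Phi_modular_sublinear:
  assumes "N_star_function \<Phi>" and f: "f \<in> L_Phi M \<Phi>"
  shows "(\<lambda>n. enn2real (modular M \<Phi> (\<lambda>x. real (Suc n) * f x)) / real (Suc n)) \<longlonglongrightarrow> 0"
proof -
  have [measurable]: "f \<in> borel_measurable M" "\<Phi> \<in> borel_measurable borel"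
    using f N_star_function_borel[OF assms(1)] by (simp_all add: L_Phi_def)
  have \<Phi>_nonneg: "0 \<le> \<Phi> x" for x
    using assms(1) by (rule N_star_function_nonneg)
  let ?u = "\<lambda>n x. ennreal (\<Phi> (real (Suc n) * f x) / real (Suc n))"
  have "(\<lambda>n. \<integral>\<^sup>+ x. ?u n x \<partial>M) \<longlonglongrightarrow> (\<integral>\<^sup>+ x. 0 \<partial>M)"
  proof (rule nn_integral_dominated_convergence[where w = "\<lambda>x. ennreal (\<Phi> (f x))"])
    show "AE x in M. ?u n x \<le> ennreal (\<Phi> (f x))" for n
    proof (intro AE_I2 ennreal_leI)
      fix x
      have "\<Phi> (real (Suc n) * f x) \<le> real (Suc n) * \<Phi> (f x)"
        by (rule N_star_function_scale_le[OF assms(1)]) simp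
      then show "\<Phi> (real (Suc n) * f x) / real (Suc n) \<le> \<Phi> (f x)"
        by (simp add: divide_le_eq mult.commute del: of_nat_Suc)
    qed
    show "AE x in M. (\<lambda>n. ?u n x) \<longlonglongrightarrow> 0"
      using tendsto_ennrealI[OF N_star_function_sublinear[OF assms(1)]] by simp
  qed (use f in \<open>simp_all add: L_Phi_def\<close>)
  then have "(\<lambda>n. enn2real (\<integral>\<^sup>+ x. ?u n x \<partial>M)) \<longlonglongrightarrow> 0"
    using tendsto_enn2real[of _ 0] by simp
  moreover have "enn2real (\<integral>\<^sup>+ x. ?u n x \<partial>M) =
      enn2real (modular M \<Phi> (\<lambda>x. real (Suc n) * f x)) / real (Suc n)" for n
  proof -
    have "(\<integral>\<^sup>+ x. ?u n x \<partial>M) = ennreal (1 / real (Suc n)) * modular M \<Phi> (\<lambda>x. real (Suc n) * f x)"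
      by (subst nn_integral_cmult[symmetric]) (auto simp: ennreal_mult[symmetric] \<Phi>_nonneg)
    then show ?thesis
      by (simp add: enn2real_mult)
  qed
  ultimately show ?thesis
    by simp
qed

lemma L_Phi_split:
  assumes "non_atomic M" and [measurable]: "\<Phi> \<in> borel_measurable borel"
    and \<Phi>: "\<And>x. 0 \<le> \<Phi> x" "\<Phi> 0 = 0"
    and h: "h \<in> L_Phi M \<Phi>" and c: "0 \<le> c" "ennreal c \<le> modular M \<Phi> h"
  obtains h1 h2 where "h1 \<in> L_Phi M \<Phi>" "h2 \<in> L_Phi M \<Phi>" "h = (\<lambda>x. h1 x + h2 x)"
    "modular M \<Phi> h1 = ennreal c"
    "ennreal c + modular M \<Phi> h2 = modular M \<Phi> h"
proof -
  have [measurable]: "h \<in> borel_measurable M"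
    using h by (simp add: L_Phi_def)
  define N where "N = density M (\<lambda>x. ennreal (\<Phi> (h x)))"
  have N_sets [simp]: "sets N = sets M" "space N = space M"
    by (simp_all add: N_def)
  have modular_eq: "(\<integral>\<^sup>+ x. ennreal (\<Phi> (u x * h x)) \<partial>M) = emeasure N S"
    if [measurable]: "S \<in> sets M" and u: "\<And>x. x \<in> space M \<Longrightarrow> u x = indicator S x" for u S
    unfolding N_def by (subst emeasure_density) (auto intro!: nn_integral_cong simp: u indicator_def \<Phi>)
  have N_space: "emeasure N (space M) = modular M \<Phi> h"
    using modular_eq[of "space M" "\<lambda>_. 1"] by simp
  then have fin: "finite_measure N"
    using h by (intro finite_measureI) (simp add: L_Phi_def)
  moreover have na: "non_atomic N"
    unfolding N_def using N_space h by (intro non_atomic_density \<open>non_atomic M\<close>) (simp_all add: N_def L_Phi_def)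
  moreover have "ennreal c \<le> ennreal (measure N (space M))"
    using c N_space finite_measure.emeasure_eq_measure[OF \<open>finite_measure N\<close>, of "space M"] by simp
  then have "c \<le> measure N (space M)"
    by (simp add: ennreal_le_iff)
  with fin na c(1) have "\<exists>B\<in>sets N. measure N B = c"
    by (elim finite_measure.non_atomic_intermediate_value) auto
  then obtain B where B [measurable]: "B \<in> sets M" and N_B: "emeasure N B = ennreal c"
    using finite_measure.emeasure_eq_measure[OF fin] by auto
  define h1 where "h1 x = indicator B x * h x" for x
  \<comment> \<open>not \<open>indicator (space M - B)\<close>: \<open>T\<close> acts on functions, so \<open>h = h1 + h2\<close> must hold outside \<open>space M\<close> too\<close>
  define h2 where "h2 x = (1 - indicator B x) * h x" for x
  have [measurable]: "h1 \<in> borel_measurable M" "h2 \<in> borel_measurable M"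
    unfolding h1_def h2_def by measurable
  show ?thesis
  proof
    show "h1 \<in> L_Phi M \<Phi>" "h2 \<in> L_Phi M \<Phi>"
      using h by (auto intro!: L_Phi_modular_le[OF h] simp: h1_def h2_def indicator_def \<Phi>)
    show "h = (\<lambda>x. h1 x + h2 x)"
      by (simp add: h1_def h2_def fun_eq_iff algebra_simps)
    show "modular M \<Phi> h1 = ennreal c"
      unfolding h1_def using modular_eq[of B "indicator B"] N_B by simp
    have "modular M \<Phi> h2 = emeasure N (space M - B)"
      unfolding h2_def by (rule modular_eq) (auto simp: indicator_def)
    moreover have "emeasure N B + emeasure N (space M - B) = emeasure N (space M)"
      by (subst plus_emeasure) (auto simp: Un_absorb1 sets.sets_into_space)
    ultimately show "ennreal c + modular M \<Phi> h2 = modular M \<Phi> h"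
      using N_B N_space by simp
  qed
qed

context
  fixes M :: "'a measure" and \<Phi> :: "real \<Rightarrow> real" and T :: "('a \<Rightarrow> real) \<Rightarrow> real" and \<delta> :: real
  assumes M_non_atomic: "non_atomic M"
    and \<Phi>_borel: "\<Phi> \<in> borel_measurable borel" and \<Phi>_nonneg: "\<And>x. 0 \<le> \<Phi> x" and \<Phi>_zero: "\<Phi> 0 = 0"
    and T_add: "\<And>f g. f \<in> L_Phi M \<Phi> \<Longrightarrow> g \<in> L_Phi M \<Phi> \<Longrightarrow> T (\<lambda>x. f x + g x) = T f + T g"
    and \<delta>_pos: "0 < \<delta>"
    and T_small: "\<And>g. g \<in> L_Phi M \<Phi> \<Longrightarrow> modular M \<Phi> g < ennreal \<delta> \<Longrightarrow> \<bar>T g\<bar> \<le> 1"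
begin

lemma additive_functional_abs_le_pieces:
  assumes "h \<in> L_Phi M \<Phi>" "modular M \<Phi> h \<le> ennreal (real k * \<delta> / 2)"
  shows "\<bar>T h\<bar> \<le> real k + 1"
  using assms
proof (induction k arbitrary: h)
  case 0
  then show ?case
    using T_small \<delta>_pos by fastforce
next
  case (Suc k)
  show ?case
  proof (cases "modular M \<Phi> h < ennreal \<delta>")
    case True
    then show ?thesis
      using T_small[OF Suc.prems(1)] by simp
  next
    case False
    have "ennreal (\<delta> / 2) \<le> ennreal \<delta>"
      using \<delta>_pos by (simp add: ennreal_leI)
    also have "\<dots> \<le> modular M \<Phi> h"
      using False by simp
    finally have half_le: "ennreal (\<delta> / 2) \<le> modular M \<Phi> h" .
    obtain h1 h2 where h: "h1 \<in> L_Phi M \<Phi>" "h2 \<in> L_Phi M \<Phi>" "h = (\<lambda>x. h1 x + h2 x)"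
      and h1: "modular M \<Phi> h1 = ennreal (\<delta> / 2)"
      and h2: "ennreal (\<delta> / 2) + modular M \<Phi> h2 = modular M \<Phi> h"
      by (rule L_Phi_split[OF M_non_atomic \<Phi>_borel \<Phi>_nonneg \<Phi>_zero Suc.prems(1) _ half_le])
        (use \<delta>_pos that in auto)
    have "\<bar>T h1\<bar> \<le> 1"
      using h1 \<delta>_pos by (intro T_small h(1)) (simp add: ennreal_lessI)
    moreover have "\<bar>T h2\<bar> \<le> real k + 1"
    proof (rule Suc.IH[OF h(2)])
      have "ennreal (\<delta> / 2) + modular M \<Phi> h2 = modular M \<Phi> h"
        by (fact h2)
      also have "\<dots> \<le> ennreal (real (Suc k) * \<delta> / 2)"
        by (fact Suc.prems(2))
      also have "\<dots> = ennreal (\<delta> / 2) + ennreal (real k * \<delta> / 2)"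
        using \<delta>_pos by (simp add: field_simps flip: ennreal_plus)
      finally show "modular M \<Phi> h2 \<le> ennreal (real k * \<delta> / 2)"
        by (simp add: ennreal_add_left_cancel_le)
    qed
    moreover have "T h = T h1 + T h2"
      using h by (simp add: T_add)
    ultimately show ?thesis
      by simp
  qed
qed

lemma additive_functional_abs_le_modular:
  assumes h: "h \<in> L_Phi M \<Phi>"
  shows "\<bar>T h\<bar> \<le> 2 * enn2real (modular M \<Phi> h) / \<delta> + 2"
proof -
  define I where "I = enn2real (modular M \<Phi> h)"
  define k where "k = nat \<lceil>2 * I / \<delta>\<rceil>"
  have "2 * I / \<delta> \<le> real k" "real k \<le> 2 * I / \<delta> + 1"
    using \<delta>_pos by (auto simp: k_def I_def)
  have "modular M \<Phi> h = ennreal I"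
    using h by (simp add: I_def L_Phi_def)
  also have "\<dots> \<le> ennreal (real k * \<delta> / 2)"
    using \<open>2 * I / \<delta> \<le> real k\<close> \<delta>_pos by (intro ennreal_leI) (simp add: field_simps)
  finally have "modular M \<Phi> h \<le> ennreal (real k * \<delta> / 2)" .
  then have "\<bar>T h\<bar> \<le> real k + 1"
    by (rule additive_functional_abs_le_pieces[OF h])
  with \<open>real k \<le> 2 * I / \<delta> + 1\<close> show ?thesis
    by (simp add: I_def)
qed

end

lemma continuous_linear_functional_L_Phi_bounded_near_0:
  assumes "N_star_function \<Phi>" and T: "continuous_linear_functional_L_Phi M \<Phi> T"
  obtains \<delta> where "0 < \<delta>"
    "\<And>g. g \<in> L_Phi M \<Phi> \<Longrightarrow> modular M \<Phi> g < ennreal \<delta> \<Longrightarrow> \<bar>T g\<bar> \<le> 1"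
proof -
  have zero: "(\<lambda>x. 0) \<in> L_Phi M \<Phi>"
    using N_star_function_zero[OF assms(1)] by (simp add: L_Phi_def)
  have "T (\<lambda>x. c * f x) = c * T f" if "f \<in> L_Phi M \<Phi>" for f c
    using T that unfolding continuous_linear_functional_L_Phi_def by blast
  from this[OF zero, of 0] have T_zero: "T (\<lambda>x. 0) = 0"
    by simp
  have "\<exists>\<delta>>0. \<forall>g\<in>L_Phi M \<Phi>. d_Phi M \<Phi> (\<lambda>x. 0) g < ennreal \<delta> \<longrightarrow> \<bar>T g - T (\<lambda>x. 0)\<bar> < 1"
    using T zero unfolding continuous_linear_functional_L_Phi_def by simp
  then obtain \<delta> where "0 < \<delta>"
    and cont: "\<And>g. g \<in> L_Phi M \<Phi> \<Longrightarrow> d_Phi M \<Phi> (\<lambda>x. 0) g < ennreal \<delta> \<Longrightarrow> \<bar>T g\<bar> < 1"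
    using T_zero by auto
  moreover have "d_Phi M \<Phi> (\<lambda>x. 0) g = modular M \<Phi> g" for g
    by (simp add: d_Phi_def N_star_function_minus[OF assms(1)])
  ultimately show ?thesis
    using that[of \<delta>] by (simp add: less_imp_le)
qed

theorem mainTheorem18:
  fixes M :: "'a measure" and \<Phi> :: "real \<Rightarrow> real" and T :: "('a \<Rightarrow> real) \<Rightarrow> real"
  assumes "non_atomic M"
    and "N_star_function \<Phi>"
    and "continuous_linear_functional_L_Phi M \<Phi> T"
  shows "\<forall>f\<in>L_Phi M \<Phi>. T f = 0"
proof
  fix f
  assume f: "f \<in> L_Phi M \<Phi>"
  obtain \<delta> where \<delta>: "0 < \<delta>"
    and small: "\<And>g. g \<in> L_Phi M \<Phi> \<Longrightarrow> modular M \<Phi> g < ennreal \<delta> \<Longrightarrow> \<bar>T g\<bar> \<le> 1"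
    using continuous_linear_functional_L_Phi_bounded_near_0[OF assms(2,3)] by blast
  note bound = additive_functional_abs_le_modular[OF assms(1) N_star_function_borel[OF assms(2)]
      N_star_function_nonneg[OF assms(2)] N_star_function_zero[OF assms(2)] _ \<delta> small]
  let ?I = "\<lambda>n. enn2real (modular M \<Phi> (\<lambda>x. real (Suc n) * f x))"
  have "\<bar>T f\<bar> \<le> 2 / \<delta> * (?I n / real (Suc n)) + 2 * inverse (real (Suc n))" for n
  proof -
    have "real (Suc n) * \<bar>T f\<bar> = \<bar>T (\<lambda>x. real (Suc n) * f x)\<bar>"
      using assms(3) f by (simp add: continuous_linear_functional_L_Phi_def abs_mult)
    also have "\<dots> \<le> 2 * ?I n / \<delta> + 2"
      using assms(3) by (intro bound L_Phi_scale[OF assms(2) f]) (auto simp: continuous_linear_functional_L_Phi_def)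
    finally show ?thesis
      by (simp add: field_simps del: of_nat_Suc)
  qed
  moreover have "(\<lambda>n. 2 / \<delta> * (?I n / real (Suc n)) + 2 * inverse (real (Suc n))) \<longlonglongrightarrow> 2 / \<delta> * 0 + 2 * 0"
    using L_Phi_modular_sublinear[OF assms(2) f] LIMSEQ_inverse_real_of_nat by (intro tendsto_intros)
  ultimately have "\<bar>T f\<bar> \<le> 2 / \<delta> * 0 + 2 * 0"
    by (intro LIMSEQ_le_const) auto
  then show "T f = 0"
    by simp
qed

end
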